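(* Let $M$ be an $n\times n$ Hermitian positive definite matrix which is irreducible. If the argument of each non-zero off-diagonal entry of $-M$ lies in $\left(-\frac{\pi}{2^n},\frac{\pi}{2^n}\right)$, then each entry of $M^{-1}$ has argument in $\left(-\frac{\pi}{2}+\frac{\pi}{2^n},\ \frac{\pi}{2}-\frac{\pi}{2^n}\right)$.
   Context: A square matrix is irreducible if it cannot be brought into block-diagonal form (with at least two diagonal blocks) by a simultaneous permutation of its rows and columns. *)

theory Defs
  imports "HOL-Analysis.Analysis"
begin

definition hermitian_mat :: "complex^'n^'n \<Rightarrow> bool" where
  "hermitian_mat M \<longleftrightarrow> (\<forall>i j. M $ i $ j = cnj (M $ j $ i))"

definition pos_def_mat :: "complex^'n^'n \<Rightarrow> bool" where
  "pos_def_mat M \<longleftrightarrow>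
     (\<forall>x :: complex^'n. x \<noteq> 0 \<longrightarrow>
        (let q = (\<Sum>i\<in>UNIV. \<Sum>j\<in>UNIV. cnj (x $ i) * M $ i $ j * x $ j)
         in Im q = 0 \<and> 0 < Re q))"

text \<open>A simultaneous permutation of rows and columns brings M into block-diagonal form
  with at least two diagonal blocks iff the index set splits into a nonempty proper subset S
  and its complement with all entries between S and its complement equal to zero.\<close>
definition reducible_mat :: "'a::zero^'n^'n \<Rightarrow> bool" where
  "reducible_mat M \<longleftrightarrow>
     (\<exists>S :: 'n set. S \<noteq> {} \<and> S \<noteq> UNIV \<and>
        (\<forall>i\<in>S. \<forall>j. j \<notin> S \<longrightarrow> M $ i $ j = 0 \<and> M $ j $ i = 0))"

definition irreducible_mat :: "'a::zero^'n^'n \<Rightarrow> bool" where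
  "irreducible_mat M \<longleftrightarrow> \<not> reducible_mat M"

end

theory Submission
  imports Defs
begin

text \<open>Eliminating an index \<open>p\<close> replaces \<open>M\<close> by its Schur complement
  \<open>M i j - M i p * M p j / M p p\<close>, which is again Hermitian and positive definite. If the nonzero
  off-diagonal entries of \<open>-M\<close> lie in the open sector of half-angle \<open>t\<close> around the positive reals, those
  of the negated Schur complement are sums \<open>-M i j + (-M i p) (-M p j) / M p p\<close> of elements of the
  sector of half-angle \<open>2 t\<close>; as long as \<open>2 t \<le> pi/2\<close> such sums do not cancel, so irreducibility also
  survives. By induction the inverse \<open>Y\<close> of the Schur complement has entries in the closed sector of
  half-angle \<open>pi/2 - 2 t\<close>. The inverse of \<open>M\<close> is obtained from \<open>Y\<close> by block inversion: its entries
  off row and column \<open>p\<close> are those of \<open>Y\<close>, its diagonal entry at \<open>p\<close> is positive, and the remaining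
  entries are sums \<open>\<Sum>k. Y k j (-M p k) / M p p\<close>, which lie in the sector of half-angle
  \<open>pi/2 - t\<close> because irreducibility makes at least one term nonzero. Starting from
  \<open>t = pi / 2^n\<close>, the half-angle reaches at most \<open>pi/2\<close> after the \<open>n - 1\<close> eliminations.\<close>

section \<open>Sectors around the positive real axis\<close>

definition in_sector :: "real \<Rightarrow> complex \<Rightarrow> bool" where
  "in_sector t z \<longleftrightarrow> (\<exists>r \<phi>. 0 < r \<and> \<bar>\<phi>\<bar> < t \<and> z = rcis r \<phi>)"

definition in_closed_sector :: "real \<Rightarrow> complex \<Rightarrow> bool" where
  "in_closed_sector t z \<longleftrightarrow> (\<exists>r \<phi>. 0 < r \<and> \<bar>\<phi>\<bar> \<le> t \<and> z = rcis r \<phi>)"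

lemma in_sector_nonzero: "in_sector t z \<Longrightarrow> z \<noteq> 0"
  unfolding in_sector_def by auto

lemma in_closed_sector_nonzero: "in_closed_sector t z \<Longrightarrow> z \<noteq> 0"
  unfolding in_closed_sector_def by auto

lemma in_sector_imp_in_closed_sector: "in_sector t z \<Longrightarrow> in_closed_sector t z"
  unfolding in_sector_def in_closed_sector_def by force

lemma in_sector_mono: "in_sector s z \<Longrightarrow> s \<le> t \<Longrightarrow> in_sector t z"
  unfolding in_sector_def by force

lemma in_closed_sector_imp_in_sector: "in_closed_sector s z \<Longrightarrow> s < t \<Longrightarrow> in_sector t z"
  unfolding in_closed_sector_def in_sector_def by force

lemma in_closed_sector_mult:
  assumes "in_closed_sector s z" "in_sector t w"
  shows "in_sector (s + t) (z * w)"
proof -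
  obtain r \<phi> r' \<psi> where "0 < r" "\<bar>\<phi>\<bar> \<le> s" "z = rcis r \<phi>" "0 < r'" "\<bar>\<psi>\<bar> < t" "w = rcis r' \<psi>"
    using assms unfolding in_closed_sector_def in_sector_def by blast
  then show ?thesis
    unfolding in_sector_def by (intro exI[of _ "r * r'"] exI[of _ "\<phi> + \<psi>"]) (auto simp: rcis_mult)
qed

lemma in_sector_mult: "in_sector s z \<Longrightarrow> in_sector t w \<Longrightarrow> in_sector (s + t) (z * w)"
  using in_closed_sector_mult in_sector_imp_in_closed_sector by blast

lemma in_sector_divide_pos:
  assumes "in_sector t z" "0 < r"
  shows "in_sector t (z / complex_of_real r)"
proof -
  obtain r' \<phi> where "0 < r'" "\<bar>\<phi>\<bar> < t" "z = rcis r' \<phi>"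
    using assms(1) unfolding in_sector_def by blast
  with assms(2) show ?thesis
    unfolding in_sector_def by (intro exI[of _ "r' / r"] exI[of _ \<phi>]) (auto simp: rcis_def)
qed

lemma in_closed_sector_of_real: "0 < r \<Longrightarrow> 0 \<le> t \<Longrightarrow> in_closed_sector t (complex_of_real r)"
  unfolding in_closed_sector_def by (intro exI[of _ r] exI[of _ 0]) (auto simp: rcis_def)

lemma in_sector_of_real: "0 < r \<Longrightarrow> 0 < t \<Longrightarrow> in_sector t (complex_of_real r)"
  using in_closed_sector_imp_in_sector in_closed_sector_of_real[of r 0] by blast

lemma Im_rcis_mult_cis: "Im (rcis r \<phi> * cis t) = r * sin (\<phi> + t)"
  by (simp add: rcis_def cis_mult sin_add algebra_simps)

text \<open>For a half-angle of at most \<open>pi/2\<close> the open sector is an intersection of two open half-planes,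
  hence closed under addition.\<close>
lemma in_sector_iff_Im:
  assumes "0 < t" "t \<le> pi / 2"
  shows "in_sector t z \<longleftrightarrow> 0 < Im (z * cis t) \<and> Im (z * cis (- t)) < 0"
proof
  assume "in_sector t z"
  then obtain r \<phi> where r: "0 < r" "\<bar>\<phi>\<bar> < t" and z: "z = rcis r \<phi>"
    unfolding in_sector_def by blast
  have "0 < sin (\<phi> + t)" "0 < sin (t - \<phi>)"
    using r assms by (auto intro: sin_gt_zero)
  moreover have "sin (\<phi> + - t) = - sin (t - \<phi>)"
    by (metis minus_diff_eq diff_conv_add_uminus sin_minus)
  ultimately show "0 < Im (z * cis t) \<and> Im (z * cis (- t)) < 0"
    using r unfolding z Im_rcis_mult_cis by simp
next
  assume Im: "0 < Im (z * cis t) \<and> Im (z * cis (- t)) < 0"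
  then have "z \<noteq> 0" by auto
  define r \<phi> where "r = cmod z" and "\<phi> = Arg z"
  have z: "z = rcis r \<phi>" and r: "0 < r"
    using \<open>z \<noteq> 0\<close> by (simp_all add: r_def \<phi>_def rcis_cmod_Arg)
  have \<phi>: "- pi < \<phi>" "\<phi> \<le> pi"
    using Arg_bounded \<phi>_def by auto
  have "Im (z * cis t) = r * sin (\<phi> + t)" "Im (z * cis (- t)) = r * sin (\<phi> - t)"
    unfolding z Im_rcis_mult_cis by simp_all
  with Im have "0 < r * sin (\<phi> + t)" "r * sin (\<phi> - t) < 0"
    by simp_all
  with r have "0 < sin (\<phi> + t)" "sin (\<phi> - t) < 0"
    by (simp_all add: zero_less_mult_iff mult_less_0_iff)
  moreover have "sin (\<phi> + t) \<le> 0" if "\<phi> \<le> - t"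
  proof -
    have "0 \<le> sin (- (\<phi> + t))"
      using that \<phi> assms by (intro sin_ge_zero) auto
    then show ?thesis
      by (subst (asm) sin_minus) linarith
  qed
  moreover have "0 \<le> sin (\<phi> - t)" if "t \<le> \<phi>"
    using sin_ge_zero[of "\<phi> - t"] that \<phi> assms by auto
  ultimately have "\<bar>\<phi>\<bar> < t" by force
  then show "in_sector t z"
    unfolding in_sector_def using z r by blast
qed

lemma in_sector_add:
  "in_sector t z \<Longrightarrow> in_sector t w \<Longrightarrow> 0 < t \<Longrightarrow> t \<le> pi / 2 \<Longrightarrow> in_sector t (z + w)"
  by (simp add: in_sector_iff_Im distrib_right)

lemma in_sector_sum:
  assumes "finite A" "\<And>k. k \<in> A \<Longrightarrow> f k \<noteq> 0 \<Longrightarrow> in_sector t (f k)" "\<exists>k\<in>A. f k \<noteq> 0"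
    "0 < t" "t \<le> pi / 2"
  shows "in_sector t (sum f A)"
  using assms(1-3)
proof (induction A rule: finite_induct)
  case (insert x F)
  show ?case
  proof (cases "\<exists>k\<in>F. f k \<noteq> 0")
    case True
    with insert have "in_sector t (sum f F)" by auto
    with insert assms(4,5) show ?thesis by (cases "f x = 0") (auto intro: in_sector_add)
  next
    case False
    with insert show ?thesis by auto
  qed
qed simp

lemma in_sector_sum_mult:
  assumes "finite A" "\<And>k. k \<in> A \<Longrightarrow> in_closed_sector s (y k)"
    "\<And>k. k \<in> A \<Longrightarrow> m k \<noteq> 0 \<Longrightarrow> in_sector t (m k)" "\<exists>k\<in>A. m k \<noteq> 0"
    "0 < s + t" "s + t \<le> pi / 2"
  shows "in_sector (s + t) (\<Sum>k\<in>A. y k * m k)"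
proof (rule in_sector_sum)
  show "\<exists>k\<in>A. y k * m k \<noteq> 0"
    using assms(2,4) in_closed_sector_nonzero by auto
qed (use assms in \<open>auto intro: in_closed_sector_mult\<close>)

lemma in_sector_iff_Arg:
  assumes "t \<le> pi"
  shows "in_sector t z \<longleftrightarrow> z \<noteq> 0 \<and> Arg z \<in> {- t <..< t}"
proof
  assume "in_sector t z"
  then obtain r \<phi> where "0 < r" "\<bar>\<phi>\<bar> < t" "z = rcis r \<phi>"
    unfolding in_sector_def by blast
  moreover from this assms have "Arg z = \<phi>"
    using Arg_rcis[of \<phi> r] by (auto simp: abs_less_iff)
  ultimately show "z \<noteq> 0 \<and> Arg z \<in> {- t <..< t}"
    by auto
next
  assume "z \<noteq> 0 \<and> Arg z \<in> {- t <..< t}"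
  then show "in_sector t z"
    unfolding in_sector_def using rcis_cmod_Arg[of z]
    by (intro exI[of _ "cmod z"] exI[of _ "Arg z"]) auto
qed

section \<open>Matrices on finite index sets\<close>

text \<open>Matrices are functions restricted to an explicit index set \<open>S\<close>, so that deleting an index
  yields a matrix of the same kind; the matrices of the theorem are the case \<open>S = UNIV\<close>.\<close>

definition quad_form :: "'n set \<Rightarrow> ('n \<Rightarrow> 'n \<Rightarrow> complex) \<Rightarrow> ('n \<Rightarrow> complex) \<Rightarrow> complex" where
  "quad_form S M x = (\<Sum>i\<in>S. \<Sum>j\<in>S. cnj (x i) * M i j * x j)"

definition hermitian_on :: "'n set \<Rightarrow> ('n \<Rightarrow> 'n \<Rightarrow> complex) \<Rightarrow> bool" where
  "hermitian_on S M \<longleftrightarrow> (\<forall>i\<in>S. \<forall>j\<in>S. M i j = cnj (M j i))"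

definition pos_def_on :: "'n set \<Rightarrow> ('n \<Rightarrow> 'n \<Rightarrow> complex) \<Rightarrow> bool" where
  "pos_def_on S M \<longleftrightarrow>
     (\<forall>x. (\<exists>i\<in>S. x i \<noteq> 0) \<longrightarrow> Im (quad_form S M x) = 0 \<and> 0 < Re (quad_form S M x))"

definition irreducible_on :: "'n set \<Rightarrow> ('n \<Rightarrow> 'n \<Rightarrow> 'a::zero) \<Rightarrow> bool" where
  "irreducible_on S M \<longleftrightarrow> (\<forall>A\<subseteq>S. A \<noteq> {} \<longrightarrow> A \<noteq> S \<longrightarrow> (\<exists>i\<in>A. \<exists>j\<in>S - A. M i j \<noteq> 0))"

definition offdiag_in_sector :: "real \<Rightarrow> 'n set \<Rightarrow> ('n \<Rightarrow> 'n \<Rightarrow> complex) \<Rightarrow> bool" where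
  "offdiag_in_sector t S M \<longleftrightarrow> (\<forall>i\<in>S. \<forall>j\<in>S. i \<noteq> j \<longrightarrow> M i j \<noteq> 0 \<longrightarrow> in_sector t (- M i j))"

definition inverse_on :: "'n set \<Rightarrow> ('n \<Rightarrow> 'n \<Rightarrow> 'a::semiring_1) \<Rightarrow> ('n \<Rightarrow> 'n \<Rightarrow> 'a) \<Rightarrow> bool" where
  "inverse_on S M X \<longleftrightarrow> (\<forall>i\<in>S. \<forall>j\<in>S. (\<Sum>k\<in>S. M i k * X k j) = (if i = j then 1 else 0))"

definition schur_complement :: "('n \<Rightarrow> 'n \<Rightarrow> 'a::field) \<Rightarrow> 'n \<Rightarrow> 'n \<Rightarrow> 'n \<Rightarrow> 'a" where
  "schur_complement M p i j = M i j - M i p * M p j / M p p"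

text \<open>The inverse of \<open>M\<close> on \<open>insert p T\<close> in terms of an inverse \<open>Y\<close> of the Schur complement
  on \<open>T\<close> (block inversion with a \<open>1 \<times> 1\<close> pivot block).\<close>
definition bordered_inverse ::
    "('n \<Rightarrow> 'n \<Rightarrow> 'a::field) \<Rightarrow> 'n \<Rightarrow> 'n set \<Rightarrow> ('n \<Rightarrow> 'n \<Rightarrow> 'a) \<Rightarrow> 'n \<Rightarrow> 'n \<Rightarrow> 'a" where
  "bordered_inverse M p T Y i j =
     (if i = p \<and> j = p then (1 + (\<Sum>k\<in>T. \<Sum>l\<in>T. M p k * Y k l * M l p) / M p p) / M p p
      else if i = p then - (\<Sum>k\<in>T. M p k * Y k j) / M p p
      else if j = p then - (\<Sum>l\<in>T. Y i l * M l p) / M p p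
      else Y i j)"

lemma pos_def_onD:
  "pos_def_on S M \<Longrightarrow> \<exists>i\<in>S. x i \<noteq> 0 \<Longrightarrow> Im (quad_form S M x) = 0 \<and> 0 < Re (quad_form S M x)"
  unfolding pos_def_on_def by blast

lemma irreducible_onD:
  "irreducible_on S M \<Longrightarrow> A \<subseteq> S \<Longrightarrow> A \<noteq> {} \<Longrightarrow> A \<noteq> S \<Longrightarrow> \<exists>i\<in>A. \<exists>j\<in>S - A. M i j \<noteq> 0"
  unfolding irreducible_on_def by blast

lemma offdiag_in_sectorD:
  "offdiag_in_sector t S M \<Longrightarrow> i \<in> S \<Longrightarrow> j \<in> S \<Longrightarrow> i \<noteq> j \<Longrightarrow> M i j \<noteq> 0
    \<Longrightarrow> in_sector t (- M i j)"
  unfolding offdiag_in_sector_def by blast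

lemma inverse_onD:
  "inverse_on S M X \<Longrightarrow> i \<in> S \<Longrightarrow> j \<in> S \<Longrightarrow> (\<Sum>k\<in>S. M i k * X k j) = (if i = j then 1 else 0)"
  unfolding inverse_on_def by blast

lemma quad_form_unit:
  assumes "finite S" "p \<in> S"
  shows "quad_form S M (\<lambda>i. if i = p then 1 else 0) = M p p"
  using assms unfolding quad_form_def
  by (simp add: if_distrib[of cnj] if_distrib[where f="\<lambda>x. x * _"] if_distrib[where f="\<lambda>x. _ * x"]
      cong: if_cong)

lemma pos_def_on_diag:
  assumes "finite S" "pos_def_on S M" "p \<in> S"
  shows "\<exists>r>0. M p p = complex_of_real r"
proof -
  define x :: "_ \<Rightarrow> complex" where "x = (\<lambda>i. if i = p then 1 else 0)"
  have "\<exists>i\<in>S. x i \<noteq> 0"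
    using assms(3) by (auto simp: x_def)
  from pos_def_onD[OF assms(2) this] show ?thesis
    unfolding x_def quad_form_unit[OF assms(1,3)]
    by (intro exI[of _ "Re (M p p)"]) (simp add: complex_eq_iff)
qed

lemma quad_form_insert:
  assumes "finite T" "p \<notin> T"
  shows "quad_form (insert p T) M x =
    cnj (x p) * M p p * x p + cnj (x p) * (\<Sum>j\<in>T. M p j * x j)
      + (\<Sum>i\<in>T. cnj (x i) * M i p) * x p + quad_form T M x"
  using assms unfolding quad_form_def
  by (simp add: sum.distrib sum_distrib_left sum_distrib_right mult.assoc algebra_simps)

section \<open>The Schur complement\<close>

lemma hermitian_on_schur:
  assumes "hermitian_on S M" "p \<in> S"
  shows "hermitian_on (S - {p}) (schur_complement M p)"
  unfolding hermitian_on_def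
proof (intro ballI)
  fix i j assume "i \<in> S - {p}" "j \<in> S - {p}"
  with assms have "cnj (M j i) = M i j" "cnj (M j p) = M p j" "cnj (M p i) = M i p"
    "cnj (M p p) = M p p"
    unfolding hermitian_on_def by (metis Diff_iff complex_cnj_cnj)+
  then show "schur_complement M p i j = cnj (schur_complement M p j i)"
    unfolding schur_complement_def by (simp add: mult.commute)
qed

text \<open>Completing the square: the form of \<open>M\<close> at \<open>u\<close>, with the value at \<open>p\<close> chosen to minimise it,
  is the form of the Schur complement at \<open>u\<close>.\<close>
lemma quad_form_schur_complement:
  assumes "finite S" "hermitian_on S M" "p \<in> S" "M p p \<noteq> 0"
  shows "quad_form S M (u(p := - (\<Sum>j\<in>S - {p}. M p j * u j) / M p p))
    = quad_form (S - {p}) (schur_complement M p) u"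
proof -
  define T where "T = S - {p}"
  define s where "s = (\<Sum>j\<in>T. M p j * u j)"
  define v where "v = u(p := - s / M p p)"
  have S: "S = insert p T" "p \<notin> T" "finite T"
    using assms(1,3) by (auto simp: T_def)
  have real: "cnj (M p p) = M p p"
    using assms(2,3) unfolding hermitian_on_def by (metis complex_cnj_cnj)
  have "cnj s = (\<Sum>j\<in>T. cnj (M p j) * cnj (u j))"
    by (simp add: s_def)
  also have "\<dots> = (\<Sum>i\<in>T. cnj (u i) * M i p)"
  proof (intro sum.cong refl)
    fix i assume "i \<in> T"
    with assms(2,3) S have "cnj (M p i) = M i p"
      unfolding hermitian_on_def by (metis complex_cnj_cnj insertCI)
    then show "cnj (M p i) * cnj (u i) = cnj (u i) * M i p"
      by (simp add: mult.commute)
  qed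
  finally have cnj_s: "cnj s = (\<Sum>i\<in>T. cnj (u i) * M i p)" .
  also have "\<dots> = (\<Sum>i\<in>T. cnj (v i) * M i p)"
    using S(2) by (intro sum.cong) (auto simp: v_def)
  finally have column: "(\<Sum>i\<in>T. cnj (v i) * M i p) = cnj s" ..
  have "(\<Sum>j\<in>T. M p j * v j) = s" "quad_form T M v = quad_form T M u"
    using S(2) unfolding s_def v_def quad_form_def by (auto intro!: sum.cong)
  then have "quad_form S M v = quad_form T M u - cnj s * s / M p p"
    using assms(4) real unfolding S(1) quad_form_insert[OF S(3,2)] column
    by (simp add: v_def field_simps)
  also have "\<dots> = quad_form T (schur_complement M p) u"
  proof -
    have "cnj s * s = (\<Sum>i\<in>T. cnj (u i) * M i p) * (\<Sum>j\<in>T. M p j * u j)"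
      unfolding cnj_s by (simp add: s_def)
    also have "\<dots> = (\<Sum>i\<in>T. \<Sum>j\<in>T. (cnj (u i) * M i p) * (M p j * u j))"
      by (rule sum_product)
    finally show ?thesis
      unfolding quad_form_def schur_complement_def
      by (simp add: sum_subtractf sum_divide_distrib right_diff_distrib left_diff_distrib mult.assoc)
  qed
  finally show ?thesis
    unfolding v_def s_def T_def .
qed

lemma pos_def_on_schur:
  assumes "finite S" "hermitian_on S M" "pos_def_on S M" "p \<in> S"
  shows "pos_def_on (S - {p}) (schur_complement M p)"
  unfolding pos_def_on_def
proof (intro allI impI)
  fix u :: "_ \<Rightarrow> complex"
  assume "\<exists>i\<in>S - {p}. u i \<noteq> 0"
  then have nonzero: "\<exists>i\<in>S. (u(p := - (\<Sum>j\<in>S - {p}. M p j * u j) / M p p)) i \<noteq> 0"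
    by auto
  have "M p p \<noteq> 0"
    using pos_def_on_diag[OF assms(1,3,4)] by auto
  from pos_def_onD[OF assms(3) nonzero]
  show "Im (quad_form (S - {p}) (schur_complement M p) u) = 0 \<and>
      0 < Re (quad_form (S - {p}) (schur_complement M p) u)"
    unfolding quad_form_schur_complement[OF assms(1,2,4) \<open>M p p \<noteq> 0\<close>] .
qed

lemma neg_schur_complement_in_sector:
  assumes "offdiag_in_sector t S M" "M p p = complex_of_real a" "0 < a" "0 < t" "2 * t \<le> pi / 2"
    "p \<in> S" and ij: "i \<in> S - {p}" "j \<in> S - {p}" "i \<noteq> j" "M i p \<noteq> 0" "M p j \<noteq> 0"
  shows "in_sector (2 * t) (- schur_complement M p i j)"
proof -
  have "in_sector (t + t) ((- M i p) * (- M p j))"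
    using ij assms(6) by (intro in_sector_mult offdiag_in_sectorD[OF assms(1)]) auto
  then have product: "in_sector (2 * t) ((- M i p) * (- M p j) / complex_of_real a)"
    using assms(3) unfolding mult_2 by (rule in_sector_divide_pos)
  have schur: "- schur_complement M p i j = - M i j + (- M i p) * (- M p j) / complex_of_real a"
    unfolding schur_complement_def assms(2) by simp
  show ?thesis
  proof (cases "M i j = 0")
    case True
    with product show ?thesis
      unfolding schur by simp
  next
    case False
    with ij assms(4) have "in_sector (2 * t) (- M i j)"
      by (auto intro: in_sector_mono offdiag_in_sectorD[OF assms(1)])
    with product assms(4,5) show ?thesis
      unfolding schur by (intro in_sector_add) auto
  qed
qed

lemma offdiag_in_sector_schur:
  assumes "offdiag_in_sector t S M" "M p p = complex_of_real a" "0 < a" "0 < t" "2 * t \<le> pi / 2"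
    "p \<in> S"
  shows "offdiag_in_sector (2 * t) (S - {p}) (schur_complement M p)"
  unfolding offdiag_in_sector_def
proof (intro ballI impI)
  fix i j assume ij: "i \<in> S - {p}" "j \<in> S - {p}" "i \<noteq> j" "schur_complement M p i j \<noteq> 0"
  show "in_sector (2 * t) (- schur_complement M p i j)"
  proof (cases "M i p \<noteq> 0 \<and> M p j \<noteq> 0")
    case True
    then show ?thesis
      using neg_schur_complement_in_sector[OF assms] ij by blast
  next
    case False
    then have "schur_complement M p i j = M i j"
      unfolding schur_complement_def by auto
    with ij assms(4) show ?thesis
      by (auto intro: in_sector_mono offdiag_in_sectorD[OF assms(1)])
  qed
qed

text \<open>The sector condition excludes cancellation in \<open>M i j - M i p * M p j / M p p\<close>, so eliminating
  \<open>p\<close> cannot disconnect the graph of \<open>M\<close>.\<close>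
lemma irreducible_on_schur:
  assumes "irreducible_on S M" "offdiag_in_sector t S M"
    "M p p = complex_of_real a" "0 < a" "0 < t" "2 * t \<le> pi / 2" "p \<in> S"
  shows "irreducible_on (S - {p}) (schur_complement M p)"
  unfolding irreducible_on_def
proof (intro allI impI)
  fix A assume A: "A \<subseteq> S - {p}" "A \<noteq> {}" "A \<noteq> S - {p}"
  show "\<exists>i\<in>A. \<exists>j\<in>S - {p} - A. schur_complement M p i j \<noteq> 0"
  proof (cases "\<exists>i\<in>A. M i p \<noteq> 0")
    case True
    then obtain i where i: "i \<in> A" "M i p \<noteq> 0" by blast
    show ?thesis
    proof (cases "\<exists>j\<in>S - {p} - A. M p j \<noteq> 0")
      case True
      then obtain j where "j \<in> S - {p} - A" "M p j \<noteq> 0" by blast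
      with i A have "in_sector (2 * t) (- schur_complement M p i j)"
        by (intro neg_schur_complement_in_sector[OF assms(2-7)]) auto
      with i \<open>j \<in> S - {p} - A\<close> show ?thesis
        using in_sector_nonzero neg_equal_0_iff_equal by blast
    next
      case False
      have "insert p A \<subseteq> S" "insert p A \<noteq> S"
        using A assms(7) by auto
      then obtain i' j where i'j: "i' \<in> insert p A" "j \<in> S - insert p A" "M i' j \<noteq> 0"
        using irreducible_onD[OF assms(1)] by blast
      then have j: "j \<in> S - {p} - A" "M p j = 0"
        using False by auto
      with i'j have "i' \<in> A" "schur_complement M p i' j = M i' j"
        unfolding schur_complement_def by auto
      with i'j j show ?thesis
        by (intro bexI[of _ i'] bexI[of _ j]) simp_all
    qed
  next
    case False
    have "A \<subseteq> S" "A \<noteq> S"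
      using A assms(7) by auto
    then obtain i j where ij: "i \<in> A" "j \<in> S - A" "M i j \<noteq> 0"
      using irreducible_onD[OF assms(1) _ A(2)] by blast
    with False have "j \<in> S - {p} - A" "schur_complement M p i j = M i j"
      unfolding schur_complement_def by auto
    with ij show ?thesis
      by (intro bexI[of _ i] bexI[of _ j]) simp_all
  qed
qed

section \<open>The inverse\<close>

lemma bordered_inverse_border:
  assumes "p \<notin> T" "k \<in> T"
  shows "bordered_inverse M p T Y p k = (\<Sum>l\<in>T. Y l k * (- M p l)) / M p p"
    and "bordered_inverse M p T Y k p = (\<Sum>l\<in>T. Y k l * (- M l p)) / M p p"
  using assms unfolding bordered_inverse_def by (auto simp: sum_negf mult.commute)

lemma bordered_inverse_inner:
  "p \<notin> T \<Longrightarrow> i \<in> T \<Longrightarrow> j \<in> T \<Longrightarrow> bordered_inverse M p T Y i j = Y i j"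
  unfolding bordered_inverse_def by auto

lemma sum_mult_inverse_schur_complement:
  assumes "inverse_on (S - {p}) (schur_complement M p) Y" "i \<in> S - {p}" "l \<in> S - {p}"
  shows "(\<Sum>k\<in>S - {p}. M i k * Y k l)
    = (if i = l then 1 else 0) + M i p * (\<Sum>k\<in>S - {p}. M p k * Y k l) / M p p"
proof -
  have "(\<Sum>k\<in>S - {p}. schur_complement M p i k * Y k l)
      = (\<Sum>k\<in>S - {p}. M i k * Y k l) - M i p * (\<Sum>k\<in>S - {p}. M p k * Y k l) / M p p"
    unfolding schur_complement_def
    by (simp add: algebra_simps sum_subtractf sum_distrib_left sum_divide_distrib)
  with inverse_onD[OF assms] show ?thesis
    by (simp add: algebra_simps)
qed

lemma inverse_on_bordered:
  fixes M Y :: "'n \<Rightarrow> 'n \<Rightarrow> 'a::field"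
  assumes "finite S" "p \<in> S" "M p p \<noteq> 0"
    and Y: "inverse_on (S - {p}) (schur_complement M p) Y"
  shows "inverse_on S M (bordered_inverse M p (S - {p}) Y)"
proof -
  define T where "T = S - {p}"
  define X where "X = bordered_inverse M p T Y"
  define a where "a = M p p"
  define W where "W l = (\<Sum>k\<in>T. M p k * Y k l)" for l
  define V where "V k = (\<Sum>l\<in>T. Y k l * M l p)" for k
  define q where "q = (\<Sum>k\<in>T. \<Sum>l\<in>T. M p k * Y k l * M l p)"
  have S: "S = insert p T" "p \<notin> T" "finite T"
    using assms(1,2) by (auto simp: T_def)
  have X: "X p p = (1 + q / a) / a" "\<And>j. j \<in> T \<Longrightarrow> X p j = - W j / a"
    "\<And>i. i \<in> T \<Longrightarrow> X i p = - V i / a" "\<And>i j. i \<in> T \<Longrightarrow> j \<in> T \<Longrightarrow> X i j = Y i j"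
    using S(2) unfolding X_def bordered_inverse_def q_def W_def V_def a_def by auto
  have column_p: "(\<Sum>k\<in>T. M i k * X k p) = - (\<Sum>k\<in>T. M i k * V k) / a" for i
    by (simp add: X(3) sum_divide_distrib sum_negf[symmetric])
  have column_T: "(\<Sum>k\<in>T. M i k * X k j) = (\<Sum>k\<in>T. M i k * Y k j)" if "j \<in> T" for i j
    using that by (simp add: X(4))
  have row_sum: "(\<Sum>k\<in>S. M i k * X k j) = M i p * X p j + (\<Sum>k\<in>T. M i k * X k j)" for i j
    using S by simp
  have MV: "(\<Sum>k\<in>T. M i k * V k) = (\<Sum>l\<in>T. (\<Sum>k\<in>T. M i k * Y k l) * M l p)" for i
  proof -
    have "(\<Sum>k\<in>T. M i k * V k) = (\<Sum>k\<in>T. \<Sum>l\<in>T. M i k * Y k l * M l p)"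
      unfolding V_def by (simp add: sum_distrib_left mult.assoc)
    also have "\<dots> = (\<Sum>l\<in>T. \<Sum>k\<in>T. M i k * Y k l * M l p)"
      by (rule sum.swap)
    finally show ?thesis
      by (simp add: sum_distrib_right)
  qed
  have qV: "(\<Sum>k\<in>T. M p k * V k) = q"
    unfolding q_def V_def by (simp add: sum_distrib_left mult.assoc)
  have qW: "(\<Sum>l\<in>T. W l * M l p) = q"
    unfolding W_def MV[of p, symmetric] qV ..
  have YM: "(\<Sum>k\<in>T. M i k * Y k l) = (if i = l then 1 else 0) + M i p * W l / a"
    if "i \<in> T" "l \<in> T" for i l
    using sum_mult_inverse_schur_complement[OF Y] that unfolding T_def W_def a_def by blast
  have "(\<Sum>k\<in>S. M i k * X k j) = (if i = j then 1 else 0)" if "i \<in> S" "j \<in> S" for i j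
  proof (cases "i = p"; cases "j = p")
    assume "i = p" "j = p"
    with assms(3) show ?thesis
      unfolding \<open>i = p\<close> \<open>j = p\<close> row_sum column_p X(1) qV a_def by (simp add: field_simps)
  next
    assume "i = p" "j \<noteq> p"
    with that S have "j \<in> T" by auto
    with \<open>i = p\<close> \<open>j \<noteq> p\<close> assms(3) show ?thesis
      unfolding row_sum X(2)[OF \<open>j \<in> T\<close>] column_T[OF \<open>j \<in> T\<close>] W_def a_def by simp
  next
    assume "i \<noteq> p" "j = p"
    with that S have "i \<in> T" by auto
    have "(\<Sum>l\<in>T. (\<Sum>k\<in>T. M i k * Y k l) * M l p) = M i p + M i p * q / a"
      using \<open>i \<in> T\<close> S(3) by (simp add: YM distrib_right sum.distrib qW[symmetric]
          sum_distrib_left sum_divide_distrib mult.assoc if_distrib[where f="\<lambda>x. x * _"] cong: if_cong)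
    with assms(3) show ?thesis
      unfolding \<open>j = p\<close> row_sum column_p X(1) MV a_def using \<open>i \<noteq> p\<close> by (simp add: field_simps)
  next
    assume "i \<noteq> p" "j \<noteq> p"
    with that S have "i \<in> T" "j \<in> T" by auto
    with assms(3) show ?thesis
      unfolding row_sum X(2)[OF \<open>j \<in> T\<close>] column_T[OF \<open>j \<in> T\<close>] YM[OF \<open>i \<in> T\<close> \<open>j \<in> T\<close>] a_def
      by simp
  qed
  then show ?thesis
    unfolding inverse_on_def X_def T_def by blast
qed

lemma quad_form_inverse_column:
  assumes "finite S" "inverse_on S M X" "p \<in> S"
  shows "quad_form S M (\<lambda>i. X i p) = cnj (X p p)"
proof -
  have "quad_form S M (\<lambda>i. X i p) = (\<Sum>i\<in>S. cnj (X i p) * (\<Sum>j\<in>S. M i j * X j p))"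
    unfolding quad_form_def by (simp add: sum_distrib_left mult.assoc)
  also have "\<dots> = (\<Sum>i\<in>S. cnj (X i p) * (if i = p then 1 else 0))"
    using assms(2,3) unfolding inverse_on_def by (intro sum.cong refl) auto
  also have "\<dots> = cnj (X p p)"
    using assms(1,3) by (simp add: if_distrib[where f="\<lambda>x. _ * x"] cong: if_cong)
  finally show ?thesis .
qed

lemma inverse_on_diag:
  assumes "finite S" "pos_def_on S M" "inverse_on S M X" "p \<in> S"
  shows "\<exists>r>0. X p p = complex_of_real r"
proof -
  have "(\<Sum>k\<in>S. M p k * X k p) = 1"
    using inverse_onD[OF assms(3,4,4)] by simp
  then have "\<exists>i\<in>S. X i p \<noteq> 0"
    by (metis (no_types, lifting) mult_zero_right sum.neutral zero_neq_one)
  from pos_def_onD[OF assms(2) this] show ?thesis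
    unfolding quad_form_inverse_column[OF assms(1,3,4)]
    by (intro exI[of _ "Re (X p p)"]) (simp add: complex_eq_iff)
qed

lemma inverse_in_sector_of_schur:
  assumes "finite S" "p \<in> S" "card S \<ge> 2"
    and M: "pos_def_on S M" "irreducible_on S M" "offdiag_in_sector t S M"
    and t: "0 < t" "2 * t \<le> pi / 2"
    and Y: "inverse_on (S - {p}) (schur_complement M p) Y"
      "\<forall>i\<in>S - {p}. \<forall>j\<in>S - {p}. in_closed_sector (pi / 2 - 2 * t) (Y i j)"
  shows "\<exists>X. inverse_on S M X \<and> (\<forall>i\<in>S. \<forall>j\<in>S. in_sector (pi / 2 - t) (X i j))"
proof (intro exI conjI ballI)
  define T where "T = S - {p}"
  define X where "X = bordered_inverse M p T Y"
  obtain a where a: "0 < a" "M p p = complex_of_real a"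
    using pos_def_on_diag[OF assms(1) M(1) assms(2)] by blast
  show inv: "inverse_on S M X"
    unfolding X_def T_def using assms(1,2) a Y(1) by (intro inverse_on_bordered) auto
  have S_not_singleton: "S \<noteq> {p}"
    using assms(3) by auto
  with assms(1,2) have T: "finite T" "p \<notin> T" "T \<noteq> {}" "S - T = {p}" "T \<subseteq> S" "T \<noteq> S"
    by (auto simp: T_def)
  have angle: "pi / 2 - 2 * t + t = pi / 2 - t" "0 < pi / 2 - t"
    using t by simp_all
  have Y_sector: "in_closed_sector (pi / 2 - 2 * t) (Y i j)" if "i \<in> T" "j \<in> T" for i j
    using Y(2) that unfolding T_def by blast
  have M_sector: "in_sector t (- M i j)" if "i \<in> S" "j \<in> S" "i \<noteq> j" "M i j \<noteq> 0" for i j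
    using offdiag_in_sectorD[OF M(3) that] .
  fix i j assume "i \<in> S" "j \<in> S"
  consider "i = p" "j = p" | "i = p" "j \<in> T" | "i \<in> T" "j = p" | "i \<in> T" "j \<in> T"
    using \<open>i \<in> S\<close> \<open>j \<in> S\<close> T_def by blast
  then show "in_sector (pi / 2 - t) (X i j)"
  proof cases
    case 1
    then show ?thesis
      using inverse_on_diag[OF assms(1) M(1) inv assms(2)] in_sector_of_real angle(2) by auto
  next
    case 2
    from irreducible_onD[OF M(2), of "{p}"] assms(2) S_not_singleton obtain k where "k \<in> T" "- M p k \<noteq> 0"
      unfolding T_def by auto
    then have "in_sector (pi / 2 - t) (\<Sum>k\<in>T. Y k j * (- M p k))"
      unfolding angle(1)[symmetric] using 2 T(1) t assms(2) Y_sector M_sector T_def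
      by (intro in_sector_sum_mult) auto
    with a show ?thesis
      unfolding X_def 2(1) bordered_inverse_border[OF T(2) 2(2)] by (simp add: in_sector_divide_pos)
  next
    case 3
    from irreducible_onD[OF M(2) T(5,3,6)] obtain k where "k \<in> T" "- M k p \<noteq> 0"
      unfolding T(4) by auto
    then have "in_sector (pi / 2 - t) (\<Sum>k\<in>T. Y i k * (- M k p))"
      unfolding angle(1)[symmetric] using 3 T(1) t assms(2) Y_sector M_sector T_def
      by (intro in_sector_sum_mult) auto
    with a show ?thesis
      unfolding X_def 3(2) bordered_inverse_border[OF T(2) 3(1)] by (simp add: in_sector_divide_pos)
  next
    case 4
    have "pi / 2 - 2 * t < pi / 2 - t"
      using t by simp
    with Y_sector[OF 4] show ?thesis
      unfolding X_def bordered_inverse_inner[OF T(2) 4] by (rule in_closed_sector_imp_in_sector)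
  qed
qed

lemma inverse_in_sector_by_schur:
  assumes "finite S" "p \<in> S" "card S \<ge> 2"
    and M: "hermitian_on S M" "pos_def_on S M" "irreducible_on S M" "offdiag_in_sector t S M"
    and t: "0 < t" "2 ^ (card S - 1) * t \<le> pi / 2"
    and smaller: "\<And>M' t'. hermitian_on (S - {p}) M' \<Longrightarrow> pos_def_on (S - {p}) M' \<Longrightarrow>
      irreducible_on (S - {p}) M' \<Longrightarrow> offdiag_in_sector t' (S - {p}) M' \<Longrightarrow>
      0 < t' \<Longrightarrow> 2 ^ (card (S - {p}) - 1) * t' \<le> pi / 2 \<Longrightarrow>
      \<exists>Y. inverse_on (S - {p}) M' Y \<and>
        (\<forall>i\<in>S - {p}. \<forall>j\<in>S - {p}. in_closed_sector (pi / 2 - t') (Y i j))"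
  shows "\<exists>X. inverse_on S M X \<and> (\<forall>i\<in>S. \<forall>j\<in>S. in_sector (pi / 2 - t) (X i j))"
proof -
  have "card S - 1 = Suc (card (S - {p}) - 1)"
    using assms(1-3) by simp
  then have smaller_bound: "2 ^ (card (S - {p}) - 1) * (2 * t) \<le> pi / 2"
    using t(2) by simp
  have "2 * t \<le> 2 ^ (card (S - {p}) - 1) * (2 * t)"
    using t(1) by simp
  with smaller_bound have double: "0 < 2 * t" "2 * t \<le> pi / 2"
    using t(1) by linarith+
  obtain a where a: "0 < a" "M p p = complex_of_real a"
    using pos_def_on_diag[OF assms(1) M(2) assms(2)] by blast
  have "hermitian_on (S - {p}) (schur_complement M p)"
    using hermitian_on_schur[OF M(1) assms(2)] .
  moreover have "pos_def_on (S - {p}) (schur_complement M p)"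
    using pos_def_on_schur[OF assms(1) M(1,2) assms(2)] .
  moreover have "irreducible_on (S - {p}) (schur_complement M p)"
    using irreducible_on_schur[OF M(3,4) a(2,1) t(1) double(2) assms(2)] .
  moreover have "offdiag_in_sector (2 * t) (S - {p}) (schur_complement M p)"
    using offdiag_in_sector_schur[OF M(4) a(2,1) t(1) double(2) assms(2)] .
  ultimately obtain Y where "inverse_on (S - {p}) (schur_complement M p) Y"
    "\<forall>i\<in>S - {p}. \<forall>j\<in>S - {p}. in_closed_sector (pi / 2 - 2 * t) (Y i j)"
    using smaller[OF _ _ _ _ double(1) smaller_bound] by blast
  then show ?thesis
    using inverse_in_sector_of_schur[OF assms(1-3) M(2-4) t(1) double(2)] by blast
qed

text \<open>The induction needs closed sectors: for a single index \<open>t = pi/2\<close> is allowed, and then the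
  open sector of half-angle \<open>pi/2 - t\<close> is empty.\<close>
lemma inverse_in_closed_sector:
  assumes "finite S" "S \<noteq> {}" "hermitian_on S M" "pos_def_on S M" "irreducible_on S M"
    "offdiag_in_sector t S M" "0 < t" "2 ^ (card S - 1) * t \<le> pi / 2"
  shows "\<exists>X. inverse_on S M X \<and> (\<forall>i\<in>S. \<forall>j\<in>S. in_closed_sector (pi / 2 - t) (X i j))"
  using assms
proof (induction "card S" arbitrary: S M t rule: less_induct)
  case less
  obtain p where p: "p \<in> S"
    using less.prems(2) by blast
  show ?case
  proof (cases "card S \<ge> 2")
    case False
    moreover have "card S \<noteq> 0"
      using less.prems(1,2) by simp
    ultimately have "card S = 1"
      by linarith
    then obtain q where "S = {q}"
      by (rule card_1_singletonE)
    with p have S: "S = {p}"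
      by simp
    obtain a where a: "0 < a" "M p p = complex_of_real a"
      using pos_def_on_diag[OF less.prems(1,4) p] by blast
    have "inverse_on S M (\<lambda>_ _. complex_of_real (1 / a))"
      unfolding inverse_on_def S using a by simp
    moreover have "in_closed_sector (pi / 2 - t) (complex_of_real (1 / a))"
      using a(1) less.prems(8) S by (intro in_closed_sector_of_real) auto
    ultimately show ?thesis
      by blast
  next
    case True
    have "card (S - {p}) < card S" "0 < card (S - {p})"
      using less.prems(1) p True by simp_all
    then have "card (S - {p}) < card S" "finite (S - {p})" "S - {p} \<noteq> {}"
      unfolding card_gt_0_iff by blast+
    then have "\<exists>Y. inverse_on (S - {p}) M' Y \<and>
        (\<forall>i\<in>S - {p}. \<forall>j\<in>S - {p}. in_closed_sector (pi / 2 - t') (Y i j))"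
      if "hermitian_on (S - {p}) M'" "pos_def_on (S - {p}) M'" "irreducible_on (S - {p}) M'"
        "offdiag_in_sector t' (S - {p}) M'" "0 < t'" "2 ^ (card (S - {p}) - 1) * t' \<le> pi / 2"
      for M' t'
      using less.hyps that by blast
    with inverse_in_sector_by_schur[OF less.prems(1) p True less.prems(3-8)] show ?thesis
      using in_sector_imp_in_closed_sector by blast
  qed
qed

lemma inverse_in_sector:
  assumes "finite S" "card S \<ge> 2" "hermitian_on S M" "pos_def_on S M" "irreducible_on S M"
    "offdiag_in_sector t S M" "0 < t" "2 ^ (card S - 1) * t \<le> pi / 2"
  shows "\<exists>X. inverse_on S M X \<and> (\<forall>i\<in>S. \<forall>j\<in>S. in_sector (pi / 2 - t) (X i j))"
proof -
  obtain p where p: "p \<in> S"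
    using assms(2) by fastforce
  have "0 < card (S - {p})"
    using assms(1,2) p by simp
  then have "finite (S - {p})" "S - {p} \<noteq> {}"
    unfolding card_gt_0_iff by blast+
  then show ?thesis
    using inverse_in_sector_by_schur[OF assms(1) p assms(2-8)] inverse_in_closed_sector by blast
qed

lemma pos_def_on_vec:
  fixes M :: "complex^'n^'n"
  assumes "pos_def_mat M"
  shows "pos_def_on UNIV (\<lambda>i j. M $ i $ j)"
  unfolding pos_def_on_def
proof (intro allI impI)
  fix x :: "'n \<Rightarrow> complex"
  assume "\<exists>i\<in>UNIV. x i \<noteq> 0"
  then have "vec_lambda x \<noteq> 0"
    by (auto simp: vec_eq_iff)
  with assms have "Im (quad_form UNIV (\<lambda>i j. M $ i $ j) (($) (vec_lambda x))) = 0 \<and>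
      0 < Re (quad_form UNIV (\<lambda>i j. M $ i $ j) (($) (vec_lambda x)))"
    unfolding pos_def_mat_def quad_form_def Let_def by blast
  moreover have "($) (vec_lambda x) = x"
    by (rule ext) simp
  ultimately show "Im (quad_form UNIV (\<lambda>i j. M $ i $ j) x) = 0 \<and>
      0 < Re (quad_form UNIV (\<lambda>i j. M $ i $ j) x)"
    by simp
qed

lemma irreducible_on_vec:
  fixes M :: "complex^'n^'n"
  assumes "hermitian_mat M" "irreducible_mat M"
  shows "irreducible_on UNIV (\<lambda>i j. M $ i $ j)"
  unfolding irreducible_on_def
proof (intro allI impI)
  fix A :: "'n set" assume A: "A \<noteq> {}" "A \<noteq> UNIV"
  show "\<exists>i\<in>A. \<exists>j\<in>UNIV - A. M $ i $ j \<noteq> 0"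
  proof (rule ccontr)
    assume "\<not> ?thesis"
    then have "M $ i $ j = 0 \<and> M $ j $ i = 0" if "i \<in> A" "j \<notin> A" for i j
      using assms(1) that unfolding hermitian_mat_def by (metis DiffI UNIV_I complex_cnj_zero)
    with A assms(2) show False
      unfolding irreducible_mat_def reducible_mat_def by blast
  qed
qed

lemma matrix_inv_eqI:
  fixes A B :: "'a::field^'n^'n"
  assumes "A ** B = mat 1"
  shows "matrix_inv A = B"
proof -
  have "\<exists>C. A ** C = mat 1 \<and> C ** A = mat 1"
    using assms matrix_left_right_inverse by blast
  then have "matrix_inv A ** A = mat 1"
    unfolding matrix_inv_def by (rule someI2_ex) blast
  then have "matrix_inv A = matrix_inv A ** (A ** B)"
    using assms by (simp add: matrix_mul_assoc)
  also have "\<dots> = B"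
    by (simp add: matrix_mul_assoc \<open>matrix_inv A ** A = mat 1\<close>)
  finally show ?thesis .
qed

lemma matrix_mul_eq_mat_1_of_inverse_on:
  "inverse_on UNIV (\<lambda>i j. A $ i $ j) X \<Longrightarrow> A ** (\<chi> i j. X i j) = mat 1"
  unfolding inverse_on_def by (simp add: vec_eq_iff matrix_matrix_mult_def mat_def)

theorem lemma4:
  fixes M :: "complex^'n^'n"
  assumes "CARD('n) \<ge> 2"
    and "hermitian_mat M"
    and "pos_def_mat M"
    and "irreducible_mat M"
    and "\<And>i j. i \<noteq> j \<Longrightarrow> M $ i $ j \<noteq> 0 \<Longrightarrow>
           Arg (- M $ i $ j) \<in> {- pi / 2 ^ CARD('n) <..< pi / 2 ^ CARD('n)}"
  shows "\<forall>i j. matrix_inv M $ i $ j \<noteq> 0 \<and>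
           Arg (matrix_inv M $ i $ j) \<in>
             {- pi / 2 + pi / 2 ^ CARD('n) <..< pi / 2 - pi / 2 ^ CARD('n)}"
proof -
  define t where "t = pi / 2 ^ CARD('n)"
  have "(1::real) \<le> 2 ^ CARD('n)"
    by simp
  then have t: "0 < t" "t \<le> pi" "2 ^ (CARD('n) - 1) * t \<le> pi / 2"
    using assms(1) by (simp_all add: t_def power_diff divide_le_eq)
  have "hermitian_on UNIV (\<lambda>i j. M $ i $ j)"
    using assms(2) unfolding hermitian_mat_def hermitian_on_def by blast
  moreover have "offdiag_in_sector t UNIV (\<lambda>i j. M $ i $ j)"
    unfolding offdiag_in_sector_def in_sector_iff_Arg[OF t(2)] using assms(5) by (simp add: t_def)
  moreover note pos_def_on_vec[OF assms(3)] irreducible_on_vec[OF assms(2,4)]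
  ultimately obtain X where X: "inverse_on UNIV (\<lambda>i j. M $ i $ j) X"
    "\<forall>i j. in_sector (pi / 2 - t) (X i j)"
    using inverse_in_sector[of "UNIV :: 'n set" "\<lambda>i j. M $ i $ j" t] assms(1) t(1,3) by auto
  have "pi / 2 - t \<le> pi"
    using t(1) pi_gt_zero by linarith
  with X(2) have "\<forall>i j. X i j \<noteq> 0 \<and> Arg (X i j) \<in> {- (pi / 2 - t) <..< pi / 2 - t}"
    by (simp add: in_sector_iff_Arg)
  moreover have "matrix_inv M = (\<chi> i j. X i j)"
    using X(1) by (intro matrix_inv_eqI matrix_mul_eq_mat_1_of_inverse_on)
  ultimately show ?thesis
    by (simp add: t_def)
qed

end
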